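(* There exists an instance of $P_n\,|\,\mathrm{conc}, p_j=1\,|\,WC_{\max}$ whose conflict graph $G$ has treewidth $1$ and in which every optimal schedule has makespan $C_{\max}=\log n+1$, where $n$ is the number of jobs.
   Context: In $P_n\,|\,\mathrm{conc}, p_j=1\,|\,WC_{\max}$, jobs $\{1,\dots,n\}$ have processing time $1$, release time $0$ and integer weights $w_j$; there is a conflict graph $G$ on the jobs, and a schedule $C:\{1,\dots,n\}\to\mathbb{N}_{\ge1}$ is feasible iff $C(i)\ne C(j)$ for every edge $\{i,j\}$ of $G$. The objective $WC_{\max}=\max_j w_jC_j$ is minimized; $C_{\max}=\max_j C_j$. $\log$ is base $2$. *)

theory Defs
  imports Complex_Main
begin

definition simple_graph :: "'a set \<Rightarrow> 'a set set \<Rightarrow> bool" where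
  "simple_graph V E \<longleftrightarrow> finite V \<and> (\<forall>e\<in>E. e \<subseteq> V \<and> card e = 2)"

definition connected_graph :: "'a set \<Rightarrow> 'a set set \<Rightarrow> bool" where
  "connected_graph V E \<longleftrightarrow>
     (\<forall>u\<in>V. \<forall>v\<in>V. (\<lambda>x y. {x, y} \<in> E)\<^sup>*\<^sup>* u v)"

definition is_tree :: "'a set \<Rightarrow> 'a set set \<Rightarrow> bool" where
  "is_tree I F \<longleftrightarrow> simple_graph I F \<and> I \<noteq> {} \<and> connected_graph I F
     \<and> card F = card I - 1"

definition tree_decomposition ::
  "'a set \<Rightarrow> 'a set set \<Rightarrow> nat set \<Rightarrow> nat set set \<Rightarrow> (nat \<Rightarrow> 'a set) \<Rightarrow> bool" where
  "tree_decomposition V E I F B \<longleftrightarrow>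
     is_tree I F
     \<and> (\<forall>i\<in>I. B i \<subseteq> V)
     \<and> (\<forall>v\<in>V. \<exists>i\<in>I. v \<in> B i)
     \<and> (\<forall>e\<in>E. \<exists>i\<in>I. e \<subseteq> B i)
     \<and> (\<forall>v\<in>V. connected_graph {i\<in>I. v \<in> B i} {f\<in>F. f \<subseteq> {i\<in>I. v \<in> B i}})"

definition decomposition_width :: "nat set \<Rightarrow> (nat \<Rightarrow> 'a set) \<Rightarrow> nat" where
  "decomposition_width I B = Max ((\<lambda>i. card (B i)) ` I) - 1"

definition treewidth :: "'a set \<Rightarrow> 'a set set \<Rightarrow> nat" where
  "treewidth V E = (LEAST w. \<exists>I F B. tree_decomposition V E I F B \<and> decomposition_width I B = w)"

definition feasible_schedule :: "nat \<Rightarrow> nat set set \<Rightarrow> (nat \<Rightarrow> nat) \<Rightarrow> bool" where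
  "feasible_schedule n E C \<longleftrightarrow>
     (\<forall>j\<in>{1..n}. C j \<ge> 1) \<and> (\<forall>e\<in>E. \<forall>i\<in>e. \<forall>j\<in>e. i \<noteq> j \<longrightarrow> C i \<noteq> C j)"

definition WCmax :: "nat \<Rightarrow> (nat \<Rightarrow> int) \<Rightarrow> (nat \<Rightarrow> nat) \<Rightarrow> int" where
  "WCmax n w C = Max ((\<lambda>j. w j * int (C j)) ` {1..n})"

definition Cmax :: "nat \<Rightarrow> (nat \<Rightarrow> nat) \<Rightarrow> nat" where
  "Cmax n C = Max (C ` {1..n})"

definition optimal_schedule :: "nat \<Rightarrow> (nat \<Rightarrow> int) \<Rightarrow> nat set set \<Rightarrow> (nat \<Rightarrow> nat) \<Rightarrow> bool" where
  "optimal_schedule n w E C \<longleftrightarrow> feasible_schedule n E C \<and>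
     (\<forall>C'. feasible_schedule n E C' \<longrightarrow> WCmax n w C \<le> WCmax n w C')"

end

theory Submission
  imports Defs "HOL-Computational_Algebra.Primes"
begin

(* Take as conflict graph the binomial tree on the jobs 1..2^k, in which j is joined to
   j + 2^v(j), v the 2-adic valuation; a job j has a neighbour j - 2^i of valuation i for
   every i < v(j). With weights (k+1)!/(v(j)+1), the schedule C j = v(j) + 1 has
   w_j C_j = (k+1)! for every job, while any schedule with WCmax <= (k+1)! satisfies
   C j <= v(j) + 1; by induction on v(j) the neighbours of j below it occupy all the slots
   1..v(j), so the bound is attained. Hence this schedule is the unique optimum on the jobs,
   and its makespan is v(2^k) + 1 = log n + 1. Using the edges themselves as bags gives a
   tree decomposition of width 1. *)

lemma symp_adjacent: "symp (\<lambda>x y. {x, y} \<in> E)"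
  by (rule sympI) (simp add: insert_commute)

lemma connected_graphI_root:
  assumes "\<And>u. u \<in> V \<Longrightarrow> (\<lambda>x y. {x, y} \<in> E)\<^sup>*\<^sup>* u r"
  shows "connected_graph V E"
  unfolding connected_graph_def
proof (intro ballI)
  fix u v assume "u \<in> V" "v \<in> V"
  then have "(\<lambda>x y. {x, y} \<in> E)\<^sup>*\<^sup>* u r" "(\<lambda>x y. {x, y} \<in> E)\<^sup>*\<^sup>* r v"
    using assms[of u] assms[of v] sympD[OF symp_rtranclp[OF symp_adjacent]] by auto
  then show "(\<lambda>x y. {x, y} \<in> E)\<^sup>*\<^sup>* u v" by (rule rtranclp_trans)
qed

lemma decomposition_width_ge_1:
  assumes "tree_decomposition V E I F B" "simple_graph V E" "e \<in> E"
  shows "1 \<le> decomposition_width I B"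
proof -
  obtain i where i: "i \<in> I" "e \<subseteq> B i"
    using assms(1,3) unfolding tree_decomposition_def by blast
  have "finite V" "B i \<subseteq> V" "card e = 2"
    using assms i unfolding simple_graph_def tree_decomposition_def by auto
  then have "2 \<le> card (B i)" using i(2) card_mono finite_subset by metis
  moreover have "finite I"
    using assms(1) unfolding tree_decomposition_def is_tree_def simple_graph_def by blast
  ultimately have "2 \<le> Max ((\<lambda>i. card (B i)) ` I)" using i(1) Max_ge_iff by blast
  then show ?thesis by (simp add: decomposition_width_def)
qed

definition parent_edges :: "(nat \<Rightarrow> nat) \<Rightarrow> nat \<Rightarrow> nat set set" where
  "parent_edges p n = (\<lambda>j. {j, p j}) ` {1..<n}"

definition parent_bags :: "(nat \<Rightarrow> nat) \<Rightarrow> nat \<Rightarrow> nat \<Rightarrow> nat set" where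
  "parent_bags p n j = (if j < n then {j, p j} else {j})"

locale parent_tree =
  fixes n :: nat and p :: "nat \<Rightarrow> nat"
  assumes root_pos: "0 < n"
    and parent_bounds: "j \<in> {1..<n} \<Longrightarrow> j < p j \<and> p j \<le> n"
begin

lemma simple_graph_parent_edges: "simple_graph {1..n} (parent_edges p n)"
proof -
  have "{j, p j} \<subseteq> {1..n} \<and> card {j, p j} = 2" if "j \<in> {1..<n}" for j
    using parent_bounds[OF that] that by auto
  then show ?thesis by (auto simp: simple_graph_def parent_edges_def)
qed

lemma card_parent_edges: "card (parent_edges p n) = n - 1"
proof -
  have "inj_on (\<lambda>j. {j, p j}) {1..<n}"
  proof (rule inj_onI)
    fix a b assume "a \<in> {1..<n}" "b \<in> {1..<n}" "{a, p a} = {b, p b}"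
    with parent_bounds[of a] parent_bounds[of b] show "a = b" by (auto simp: doubleton_eq_iff)
  qed
  then show ?thesis by (simp add: parent_edges_def card_image)
qed

lemma reaches_root:
  assumes "j \<in> {1..n}"
  shows "(\<lambda>x y. {x, y} \<in> parent_edges p n)\<^sup>*\<^sup>* j n"
  using assms
proof (induction "n - j" arbitrary: j rule: less_induct)
  case less
  show ?case
  proof (cases "j = n")
    case False
    then have j: "j \<in> {1..<n}" using less.prems by simp
    then have "{j, p j} \<in> parent_edges p n" by (simp add: parent_edges_def)
    moreover have "(\<lambda>x y. {x, y} \<in> parent_edges p n)\<^sup>*\<^sup>* (p j) n"
      using less.hyps[of "p j"] parent_bounds[OF j] j by auto
    ultimately show ?thesis by (rule converse_rtranclp_into_rtranclp)
  qed simp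
qed

lemma is_tree: "is_tree {1..n} (parent_edges p n)"
  using simple_graph_parent_edges card_parent_edges connected_graphI_root[of "{1..n}" _ n, OF reaches_root] root_pos
  by (simp add: is_tree_def)

lemma connected_bags_containing:
  assumes "v \<in> {1..n}"
  defines "S \<equiv> {i \<in> {1..n}. v \<in> parent_bags p n i}"
  shows "connected_graph S {f \<in> parent_edges p n. f \<subseteq> S}"
proof (rule connected_graphI_root)
  fix u assume u: "u \<in> S"
  show "(\<lambda>x y. {x, y} \<in> {f \<in> parent_edges p n. f \<subseteq> S})\<^sup>*\<^sup>* u v"
  proof (cases "u = v")
    case False
    then have "u \<in> {1..<n}" "p u = v" using u by (auto simp: S_def parent_bags_def split: if_splits)
    moreover have "v \<in> S" using assms(1) by (auto simp: S_def parent_bags_def)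
    ultimately have "{u, v} \<in> {f \<in> parent_edges p n. f \<subseteq> S}"
      using u by (auto simp: parent_edges_def)
    then show ?thesis by (rule r_into_rtranclp)
  qed simp
qed

lemma tree_decomposition_parent_bags:
  "tree_decomposition {1..n} (parent_edges p n) {1..n} (parent_edges p n) (parent_bags p n)"
  unfolding tree_decomposition_def
proof (intro conjI ballI)
  fix i assume "i \<in> {1..n}"
  then show "parent_bags p n i \<subseteq> {1..n}"
    using parent_bounds[of i] by (auto simp: parent_bags_def)
next
  fix e assume "e \<in> parent_edges p n"
  then obtain j where "j \<in> {1..<n}" "e = {j, p j}" by (auto simp: parent_edges_def)
  then show "\<exists>i\<in>{1..n}. e \<subseteq> parent_bags p n i"
    by (intro bexI[of _ j]) (auto simp: parent_bags_def)
next
  fix v assume "v \<in> {1..n}"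
  then show "\<exists>i\<in>{1..n}. v \<in> parent_bags p n i" by (auto simp: parent_bags_def)
qed (use is_tree connected_bags_containing in blast)+

lemma decomposition_width_eq_1:
  assumes "1 < n"
  shows "decomposition_width {1..n} (parent_bags p n) = 1"
proof -
  have "Max ((\<lambda>i. card (parent_bags p n i)) ` {1..n}) = 2"
  proof (rule Max_eqI)
    show "2 \<in> (\<lambda>i. card (parent_bags p n i)) ` {1..n}"
      using assms parent_bounds[of 1] by (intro image_eqI[of _ _ 1]) (auto simp: parent_bags_def)
  qed (auto simp: parent_bags_def card_insert_if)
  then show ?thesis by (simp add: decomposition_width_def)
qed

lemma treewidth_eq_1:
  assumes "1 < n"
  shows "treewidth {1..n} (parent_edges p n) = 1"
  unfolding treewidth_def
proof (rule Least_equality)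
  show "\<exists>I F B. tree_decomposition {1..n} (parent_edges p n) I F B \<and> decomposition_width I B = 1"
    using tree_decomposition_parent_bags decomposition_width_eq_1[OF assms] by blast
next
  fix w assume "\<exists>I F B. tree_decomposition {1..n} (parent_edges p n) I F B \<and> decomposition_width I B = w"
  moreover have "{1, p 1} \<in> parent_edges p n" using assms by (simp add: parent_edges_def)
  ultimately show "1 \<le> w" using decomposition_width_ge_1 simple_graph_parent_edges by blast
qed

end

lemma feasible_schedule_adjacent:
  assumes "feasible_schedule n E C" "{i, j} \<in> E" "i \<noteq> j"
  shows "C i \<noteq> C j"
  using assms unfolding feasible_schedule_def by (metis insertI1 insertI2)

lemma WCmax_le_iff:
  assumes "0 < n"
  shows "WCmax n w C \<le> T \<longleftrightarrow> (\<forall>j\<in>{1..n}. w j * int (C j) \<le> T)"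
  using assms by (simp add: WCmax_def)

lemma feasible_schedule_forced:
  assumes feasible: "feasible_schedule n E C" and below: "\<forall>j\<in>{1..n}. C j \<le> L j"
    and neighbours: "\<And>j c. j \<in> {1..n} \<Longrightarrow> 1 \<le> c \<Longrightarrow> c < L j \<Longrightarrow>
      \<exists>i\<in>{1..n}. L i = c \<and> i \<noteq> j \<and> {i, j} \<in> E"
  shows "\<forall>j\<in>{1..n}. C j = L j"
proof
  fix j assume "j \<in> {1..n}"
  then show "C j = L j"
  proof (induction "L j" arbitrary: j rule: less_induct)
    case less
    have "1 \<le> C j" "C j \<le> L j"
      using feasible below less.prems by (auto simp: feasible_schedule_def)
    show ?case
    proof (rule ccontr)
      assume "C j \<noteq> L j"
      then obtain i where i: "i \<in> {1..n}" "L i = C j" "i \<noteq> j" "{i, j} \<in> E"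
        using neighbours[OF less.prems \<open>1 \<le> C j\<close>] \<open>C j \<le> L j\<close> by auto
      then have "C i = C j" using less.hyps[of i] \<open>C j \<le> L j\<close> \<open>C j \<noteq> L j\<close> by auto
      with feasible_schedule_adjacent[OF feasible i(4,3)] show False by simp
    qed
  qed
qed

lemma optimal_schedule_iff_agrees:
  assumes "0 < n" and feasible: "feasible_schedule n E L"
    and weights: "\<And>j. j \<in> {1..n} \<Longrightarrow> 0 < w j \<and> w j * int (L j) = T"
    and forced: "\<And>C. feasible_schedule n E C \<Longrightarrow> \<forall>j\<in>{1..n}. C j \<le> L j \<Longrightarrow>
      \<forall>j\<in>{1..n}. C j = L j"
  shows "optimal_schedule n w E C \<longleftrightarrow> feasible_schedule n E C \<and> (\<forall>j\<in>{1..n}. C j = L j)"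
proof -
  have "w j * int (C' j) \<le> T \<longleftrightarrow> C' j \<le> L j" if "j \<in> {1..n}" for j C'
    using weights[OF that] by (metis mult_le_cancel_left_pos of_nat_le_iff)
  then have below_iff: "WCmax n w C' \<le> T \<longleftrightarrow> (\<forall>j\<in>{1..n}. C' j \<le> L j)" for C'
    by (simp add: WCmax_le_iff[OF assms(1)])
  have agrees: "WCmax n w C' = T" if "\<forall>j\<in>{1..n}. C' j = L j" for C'
  proof (rule antisym)
    show "WCmax n w C' \<le> T" using below_iff that by simp
    have "T = w 1 * int (C' 1)" using weights[of 1] that assms(1) by simp
    also have "\<dots> \<le> WCmax n w C'" unfolding WCmax_def using assms(1) by (intro Max_ge) simp_all
    finally show "T \<le> WCmax n w C'" .
  qed
  have optimum: "T \<le> WCmax n w C'" if "feasible_schedule n E C'" for C'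
  proof (cases "WCmax n w C' \<le> T")
    case True
    then show ?thesis using below_iff forced[OF that] agrees by simp
  qed simp
  show ?thesis
  proof
    assume "optimal_schedule n w E C"
    then have "feasible_schedule n E C" "WCmax n w C \<le> T"
      using feasible agrees[of L] unfolding optimal_schedule_def by auto
    then show "feasible_schedule n E C \<and> (\<forall>j\<in>{1..n}. C j = L j)"
      using below_iff forced by simp
  next
    assume "feasible_schedule n E C \<and> (\<forall>j\<in>{1..n}. C j = L j)"
    then show "optimal_schedule n w E C"
      using agrees optimum unfolding optimal_schedule_def by simp
  qed
qed

lemma two_power_multiplicity_le:
  fixes j :: nat
  assumes "0 < j"
  shows "2 ^ multiplicity 2 j \<le> j"
  using assms by (intro dvd_imp_le multiplicity_dvd)

lemma multiplicity_two_le_exponent: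
  fixes j :: nat
  assumes "0 < j" "j \<le> 2 ^ k"
  shows "multiplicity 2 j \<le> k"
proof -
  have "2 ^ multiplicity 2 j \<le> (2::nat) ^ k"
    using two_power_multiplicity_le[OF assms(1)] assms(2) by linarith
  then show ?thesis by (rule power_le_imp_le_exp[rotated]) simp
qed

lemma dvd_less_imp_add_le:
  fixes a j m :: nat
  assumes "a dvd j" "a dvd m" "j < m"
  shows "j + a \<le> m"
proof -
  have "a dvd m - j" using assms(2,1) by (rule dvd_diff_nat)
  then have "a \<le> m - j" using assms(3) by (intro dvd_imp_le) simp_all
  then show ?thesis using assms(3) by simp
qed

(* The parent map of a Fenwick tree; on 1..2^k it yields the binomial tree rooted at 2^k. *)
definition binomial_parent :: "nat \<Rightarrow> nat" where
  "binomial_parent j = j + 2 ^ multiplicity 2 j"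

lemma binomial_parent_le:
  assumes "0 < j" "j < 2 ^ k"
  shows "binomial_parent j \<le> 2 ^ k"
proof -
  have "multiplicity 2 j \<le> k" using assms by (intro multiplicity_two_le_exponent) simp_all
  then have "2 ^ multiplicity 2 j dvd (2::nat) ^ k" by (rule le_imp_power_dvd)
  then show ?thesis
    unfolding binomial_parent_def using assms(2) by (intro dvd_less_imp_add_le multiplicity_dvd)
qed

lemma multiplicity_binomial_parent:
  fixes j :: nat
  assumes "0 < j"
  shows "multiplicity 2 j < multiplicity 2 (binomial_parent j)"
proof -
  define t where "t = multiplicity 2 j"
  obtain m where m: "j = 2 ^ t * m" "odd m"
    using multiplicity_decompose'[of j 2] assms by (auto simp: t_def)
  then have parent: "binomial_parent j = 2 ^ t * (m + 1)"
    by (simp add: binomial_parent_def t_def algebra_simps)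
  have "2 dvd m + 1" using m(2) by simp
  then have "2 ^ t * 2 dvd 2 ^ t * (m + 1)" by (rule mult_dvd_mono[OF dvd_refl])
  then have "2 ^ Suc t dvd binomial_parent j" by (simp only: parent power_Suc2)
  then show ?thesis
    by (subst (asm) power_dvd_iff_le_multiplicity) (auto simp: binomial_parent_def t_def)
qed

lemma binomial_child:
  fixes v :: nat
  assumes "0 < v" "i < multiplicity 2 v"
  shows "0 < v - 2 ^ i" "multiplicity 2 (v - 2 ^ i) = i" "binomial_parent (v - 2 ^ i) = v"
proof -
  have "2 ^ Suc i dvd v" using assms(2) by (intro multiplicity_dvd') simp
  then obtain q where q: "v = 2 ^ Suc i * q" by blast
  with assms(1) have "0 < q" by simp
  have child: "v - 2 ^ i = 2 ^ i * (2 * q - 1)"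
    using q by (simp add: right_diff_distrib')
  show "0 < v - 2 ^ i" using child \<open>0 < q\<close> by simp
  show "multiplicity 2 (v - 2 ^ i) = i"
    using child \<open>0 < q\<close> by (intro multiplicity_decomposeI) auto
  then show "binomial_parent (v - 2 ^ i) = v"
    using q \<open>0 < q\<close> by (simp add: binomial_parent_def)
qed

interpretation binomial: parent_tree "2 ^ k" binomial_parent for k
  by unfold_locales (simp_all add: binomial_parent_le, simp add: binomial_parent_def)

definition level_schedule :: "nat \<Rightarrow> nat" where
  "level_schedule j = multiplicity 2 j + 1"

lemma level_schedule_feasible:
  "feasible_schedule (2 ^ k) (parent_edges binomial_parent (2 ^ k)) level_schedule"
  unfolding feasible_schedule_def
proof (intro conjI ballI impI)
  fix e i j assume e: "e \<in> parent_edges binomial_parent (2 ^ k)" and "i \<in> e" "j \<in> e" "i \<noteq> j"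
  from e obtain a where "a \<in> {1..<2 ^ k}" "e = {a, binomial_parent a}"
    unfolding parent_edges_def by blast
  with \<open>i \<in> e\<close> \<open>j \<in> e\<close> \<open>i \<noteq> j\<close> multiplicity_binomial_parent[of a]
  show "level_schedule i \<noteq> level_schedule j"
    by (auto simp: level_schedule_def)
qed (simp add: level_schedule_def)

lemma level_schedule_neighbours:
  assumes "j \<in> {1..2 ^ k}" "1 \<le> c" "c < level_schedule j"
  shows "\<exists>i\<in>{1..2 ^ k}. level_schedule i = c \<and> i \<noteq> j \<and> {i, j} \<in> parent_edges binomial_parent (2 ^ k)"
proof -
  let ?i = "j - 2 ^ (c - 1)"
  have "0 < j" "c - 1 < multiplicity 2 j" using assms by (auto simp: level_schedule_def)
  note child = binomial_child[OF this]
  have "?i < j" using \<open>0 < j\<close> by (intro diff_less) simp_all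
  moreover have "?i < 2 ^ k" using \<open>?i < j\<close> by (rule less_le_trans) (use assms(1) in simp)
  ultimately have i: "?i \<in> {1..<2 ^ k}" using child(1) by simp
  then have "{?i, j} \<in> parent_edges binomial_parent (2 ^ k)"
    unfolding parent_edges_def using child(3) by force
  moreover have "level_schedule ?i = c" using child(2) assms(2) by (simp add: level_schedule_def)
  ultimately show ?thesis using \<open>?i < j\<close> i by (intro bexI[of _ ?i]) auto
qed

lemma Cmax_level_schedule: "Cmax (2 ^ k) level_schedule = k + 1"
  unfolding Cmax_def
proof (rule Max_eqI)
  have "multiplicity 2 ((2::nat) ^ k) = k" by (rule multiplicity_decomposeI[of _ _ _ 1]) simp_all
  then show "k + 1 \<in> level_schedule ` {1..2 ^ k}"
    by (intro image_eqI[of _ _ "2 ^ k"]) (simp_all add: level_schedule_def)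
qed (auto simp: level_schedule_def multiplicity_two_le_exponent)

definition binomial_weight :: "nat \<Rightarrow> nat \<Rightarrow> int" where
  "binomial_weight k j = int (fact (k + 1) div level_schedule j)"

lemma binomial_weight:
  assumes "j \<in> {1..2 ^ k}"
  shows "0 < binomial_weight k j \<and> binomial_weight k j * int (level_schedule j) = fact (k + 1)"
proof -
  define q where "q = fact (k + 1) div level_schedule j"
  have "level_schedule j dvd fact (k + 1)"
    using assms by (intro dvd_fact) (auto simp: level_schedule_def multiplicity_two_le_exponent)
  then have q: "q * level_schedule j = fact (k + 1)" by (simp add: q_def)
  then have "0 < q" by (intro gr0I) auto
  moreover have "int q * int (level_schedule j) = fact (k + 1)"
    using q by (metis of_nat_mult of_nat_fact)
  ultimately show ?thesis by (simp add: binomial_weight_def q_def)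
qed

lemma optimal_schedule_binomial_iff:
  "optimal_schedule (2 ^ k) (binomial_weight k) (parent_edges binomial_parent (2 ^ k)) C \<longleftrightarrow>
    feasible_schedule (2 ^ k) (parent_edges binomial_parent (2 ^ k)) C \<and>
    (\<forall>j\<in>{1..2 ^ k}. C j = level_schedule j)"
proof (rule optimal_schedule_iff_agrees[OF _ level_schedule_feasible binomial_weight])
  show "\<forall>j\<in>{1..2 ^ k}. C' j = level_schedule j"
    if "feasible_schedule (2 ^ k) (parent_edges binomial_parent (2 ^ k)) C'"
      and "\<forall>j\<in>{1..2 ^ k}. C' j \<le> level_schedule j" for C'
    using that level_schedule_neighbours by (rule feasible_schedule_forced)
qed simp_all

theorem lemma3:
  fixes k :: nat and n :: nat
  assumes "k \<ge> 1" and "n = 2 ^ k"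
  shows "\<exists>(w :: nat \<Rightarrow> int) (E :: nat set set).
           simple_graph {1..n} E
           \<and> (\<forall>j\<in>{1..n}. w j \<ge> 1)
           \<and> treewidth {1..n} E = 1
           \<and> (\<exists>C. optimal_schedule n w E C)
           \<and> (\<forall>C. optimal_schedule n w E C \<longrightarrow> real (Cmax n C) = log 2 (real n) + 1)"
proof -
  let ?E = "parent_edges binomial_parent (2 ^ k)"
  have "treewidth {1..2 ^ k} ?E = 1"
    using assms(1) by (intro binomial.treewidth_eq_1 one_less_power) auto
  moreover have "\<forall>j\<in>{1..2 ^ k}. 1 \<le> binomial_weight k j"
    using binomial_weight by (simp add: int_one_le_iff_zero_less)
  moreover have "optimal_schedule (2 ^ k) (binomial_weight k) ?E level_schedule"
    by (simp add: optimal_schedule_binomial_iff level_schedule_feasible)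
  moreover have "real (Cmax (2 ^ k) C) = log 2 (real (2 ^ k)) + 1"
    if "optimal_schedule (2 ^ k) (binomial_weight k) ?E C" for C
  proof -
    have "C ` {1..2 ^ k} = level_schedule ` {1..2 ^ k}"
      using that by (intro image_cong) (simp_all add: optimal_schedule_binomial_iff)
    then show ?thesis using Cmax_level_schedule by (simp add: Cmax_def log_nat_power)
  qed
  ultimately show ?thesis
    unfolding assms(2) using binomial.simple_graph_parent_edges by blast
qed

end
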